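(* For every vertex $t\in\mathbb T_n$ of the $(\mathbf r,\mathbf z)$-seed pattern described in the context, $G_tB_t=B_{t_0}C_t$.
   Context: $n\ge1$, $[b]_+=\max(b,0)$. $\mathbb T_n$ is the $n$-regular tree with edges labeled $1,\dots,n$, distinct labels at each vertex; $t\overset{k}{-}t'$ denotes an edge labeled $k$; $t_0$ is a root vertex. Fix positive integers $r_1,\dots,r_n$ and a skew-symmetrizable integer $n\times n$ matrix $B$. Assign integer $n\times n$ matrices $B_t=(b_{ij;t})$, $C_t=(c_{ij;t})$ and $G_t$ (with columns $\mathbf g_{i;t}$) to each $t\in\mathbb T_n$ by $B_{t_0}=B$, $C_{t_0}=G_{t_0}=I_n$, and for $t\overset{k}{-}t'$, with $\varepsilon\in\{\pm1\}$ (the results are independent of $\varepsilon$): $b_{ij;t'}=-b_{ij;t}$ if $i=k$ or $j=k$, else $b_{ij;t'}=b_{ij;t}+r_k([-\varepsilon b_{ik;t}]_+b_{kj;t}+b_{ik;t}[\varepsilon b_{kj;t}]_+)$; $c_{ij;t'}=-c_{ij;t}$ if $j=k$, else $c_{ij;t'}=c_{ij;t}+r_k(c_{ik;t}[\varepsilon b_{kj;t}]_++[-\varepsilon c_{ik;t}]_+b_{kj;t})$; $\mathbf g_{i;t'}=\mathbf g_{i;t}$ for $i\ne k$ and $\mathbf g_{k;t'}=-\mathbf g_{k;t}+r_k\big(\sum_{j=1}^n[-\varepsilon b_{jk;t}]_+\mathbf g_{j;t}-\sum_{j=1}^n[-\varepsilon c_{jk;t}]_+\mathbf b_j\big)$ with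 $\mathbf b_j$ the $j$-th column of $B$. ($B_t$ is the exchange matrix at $t$ of the generalized $(\mathbf r,\mathbf z)$-seed pattern with initial exchange matrix $B$, and $C_t,G_t$ are its $C$- and $G$-matrices.) *)

theory Defs
  imports Main
begin

(* n x n integer matrices are functions nat => nat => int; only entries with
   indices < n are meaningful. Labels 1..n of the paper are 0..n-1 here. *)

type_synonym imat = "nat \<Rightarrow> nat \<Rightarrow> int"

definition pos :: "int \<Rightarrow> int" where
  "pos b = max b 0"

definition idm :: imat where
  "idm = (\<lambda>i j. if i = j then 1 else 0)"

definition matmul :: "nat \<Rightarrow> imat \<Rightarrow> imat \<Rightarrow> imat" where
  "matmul n X Y = (\<lambda>i j. \<Sum>l<n. X i l * Y l j)"

definition skew_symmetrizable :: "nat \<Rightarrow> imat \<Rightarrow> bool" where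
  "skew_symmetrizable n B \<longleftrightarrow>
     (\<exists>d::nat \<Rightarrow> int. (\<forall>i<n. d i > 0) \<and>
        (\<forall>i<n. \<forall>j<n. d i * B i j = - (d j * B j i)))"

definition mutB :: "(nat \<Rightarrow> int) \<Rightarrow> nat \<Rightarrow> int \<Rightarrow> imat \<Rightarrow> imat" where
  "mutB r k e B = (\<lambda>i j. if i = k \<or> j = k then - B i j
      else B i j + r k * (pos (- e * B i k) * B k j + B i k * pos (e * B k j)))"

definition mutC :: "(nat \<Rightarrow> int) \<Rightarrow> nat \<Rightarrow> int \<Rightarrow> imat \<Rightarrow> imat \<Rightarrow> imat" where
  "mutC r k e B C = (\<lambda>i j. if j = k then - C i j
      else C i j + r k * (C i k * pos (e * B k j) + pos (- e * C i k) * B k j))"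

(* mutation of the G-matrix (columns g_j); B0 is the initial exchange matrix *)
definition mutG :: "nat \<Rightarrow> (nat \<Rightarrow> int) \<Rightarrow> imat \<Rightarrow> nat \<Rightarrow> int \<Rightarrow> imat \<Rightarrow> imat \<Rightarrow> imat \<Rightarrow> imat" where
  "mutG n r B0 k e B C G = (\<lambda>i j. if j \<noteq> k then G i j
      else - G i k + r k * ((\<Sum>l<n. pos (- e * B l k) * G i l)
                            - (\<Sum>l<n. pos (- e * C l k) * B0 i l)))"

definition mut_seed :: "nat \<Rightarrow> (nat \<Rightarrow> int) \<Rightarrow> imat \<Rightarrow> imat \<times> imat \<times> imat \<Rightarrow> nat \<times> int
     \<Rightarrow> imat \<times> imat \<times> imat" where
  "mut_seed n r B0 S ke = (case S of (B, C, G) \<Rightarrow> (case ke of (k, e) \<Rightarrow>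
      (mutB r k e B, mutC r k e B C, mutG n r B0 k e B C G)))"

(* (B_t, C_t, G_t) at the vertex t reached from t0 along the path with edge labels
   k_1, k_2, ... (first step first), using sign e_i at step i *)
definition seed_at :: "nat \<Rightarrow> (nat \<Rightarrow> int) \<Rightarrow> imat \<Rightarrow> (nat \<times> int) list \<Rightarrow> imat \<times> imat \<times> imat" where
  "seed_at n r B0 ks = foldl (mut_seed n r B0) (B0, idm, idm) ks"

end

theory Submission
  imports Defs
begin

text \<open>
  A skew-symmetrizer of \<open>B\<close> is also one of every
  mutated \<open>B\<^sub>t\<close>, so every \<open>B\<^sub>t\<close> has zero diagonal. With \<open>b\<^sub>k\<^sub>k = 0\<close> the new \<open>k\<close>-th column of
  \<open>G\<^sub>t' B\<^sub>t'\<close> is minus the old one, as for \<open>B C\<^sub>t'\<close>. In any other column \<open>j\<close>, the new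
  \<open>g\<^sub>k\<close> contributes \<open>r\<^sub>k b\<^sub>k\<^sub>j (\<Sum>\<^sub>l [-\<epsilon> b\<^sub>l\<^sub>k]\<^sub>+ g\<^sub>l - \<Sum>\<^sub>l [-\<epsilon> c\<^sub>l\<^sub>k]\<^sub>+ b\<^sub>l)\<close>; the first sum cancels
  against the change of \<open>B\<^sub>t\<close>, and the rest is the change of \<open>B C\<^sub>t\<close> once \<open>G\<^sub>t B\<^sub>t = B C\<^sub>t\<close>
  is used for the columns \<open>j\<close> and \<open>k\<close>.
\<close>

lemma mult_pos_eq_pos_mult: "(0::int) < d \<Longrightarrow> d * pos x = pos (d * x)"
  unfolding pos_def by (simp add: max_def mult_le_0_iff zero_le_mult_iff)

definition skew_symmetrizer :: "nat \<Rightarrow> (nat \<Rightarrow> int) \<Rightarrow> imat \<Rightarrow> bool" where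
  "skew_symmetrizer n d B \<longleftrightarrow>
     (\<forall>i<n. d i > 0) \<and> (\<forall>i<n. \<forall>j<n. d i * B i j = - (d j * B j i))"

lemma skew_symmetrizable_iff: "skew_symmetrizable n B \<longleftrightarrow> (\<exists>d. skew_symmetrizer n d B)"
  unfolding skew_symmetrizable_def skew_symmetrizer_def ..

lemma skew_symmetrizer_diag:
  assumes "skew_symmetrizer n d B" "i < n"
  shows "B i i = 0"
proof -
  have "d i * B i i = - (d i * B i i)" "d i > 0"
    using assms unfolding skew_symmetrizer_def by blast+
  then show ?thesis by simp
qed

lemma skew_symmetrizer_pos_swap:
  assumes "skew_symmetrizer n d B" "i < n" "k < n"
  shows "d i * pos (- e * B i k) = d k * pos (e * B k i)"
proof -
  have d: "d i > 0" "d k > 0" and skew: "d i * B i k = - (d k * B k i)"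
    using assms unfolding skew_symmetrizer_def by blast+
  have "d i * pos (- e * B i k) = pos (- e * (d i * B i k))"
    using mult_pos_eq_pos_mult[OF d(1)] by (simp add: mult.left_commute)
  also have "\<dots> = pos (e * (d k * B k i))"
    using skew by simp
  also have "\<dots> = d k * pos (e * B k i)"
    using mult_pos_eq_pos_mult[OF d(2)] by (simp add: mult.left_commute)
  finally show ?thesis .
qed

lemma skew_symmetrizer_mutB:
  assumes sk: "skew_symmetrizer n d B" and k: "k < n"
  shows "skew_symmetrizer n d (mutB r k e B)"
  unfolding skew_symmetrizer_def
proof (intro conjI allI impI)
  show "d i > 0" if "i < n" for i
    using sk that unfolding skew_symmetrizer_def by blast
  fix i j assume i: "i < n" and j: "j < n"
  have skew: "d i * B i j = - (d j * B j i)" "d i * B i k = - (d k * B k i)"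
    "d k * B k j = - (d j * B j k)"
    using sk i j k unfolding skew_symmetrizer_def by blast+
  show "d i * mutB r k e B i j = - (d j * mutB r k e B j i)"
  proof (cases "i = k \<or> j = k")
    case True
    then show ?thesis
      using skew(1) unfolding mutB_def by auto
  next
    case False
    have swap_i: "d i * pos (- e * B i k) = d k * pos (e * B k i)"
      and swap_j: "d j * pos (- e * B j k) = d k * pos (e * B k j)"
      using skew_symmetrizer_pos_swap[OF sk] i j k by blast+
    have "d i * (pos (- e * B i k) * B k j) = pos (e * B k i) * (d k * B k j)"
      by (simp add: swap_i[symmetric] ac_simps)
    also have "\<dots> = - (d j * (B j k * pos (e * B k i)))"
      unfolding skew(3) by (simp add: ac_simps)
    finally have term1: "d i * (pos (- e * B i k) * B k j) = - (d j * (B j k * pos (e * B k i)))" .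
    have "d i * (B i k * pos (e * B k j)) = (d i * B i k) * pos (e * B k j)"
      by (simp add: ac_simps)
    also have "\<dots> = - (B k i * (d j * pos (- e * B j k)))"
      unfolding skew(2) swap_j by (simp add: ac_simps)
    finally have term2: "d i * (B i k * pos (e * B k j)) = - (d j * (pos (- e * B j k) * B k i))"
      by (simp add: ac_simps)
    have "d i * mutB r k e B i j
        = d i * B i j + r k * (d i * (pos (- e * B i k) * B k j) + d i * (B i k * pos (e * B k j)))"
      using False unfolding mutB_def by (simp add: algebra_simps)
    also have "\<dots> = - (d j * mutB r k e B j i)"
      using False unfolding term1 term2 skew(1) mutB_def by (simp add: algebra_simps)
    finally show ?thesis .
  qed
qed

lemma matmul_idm_left: "i < n \<Longrightarrow> matmul n idm B i j = B i j"
  unfolding matmul_def idm_def by (simp add: if_distrib[of "\<lambda>x. x * _"] cong: if_cong)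

lemma matmul_idm_right: "j < n \<Longrightarrow> matmul n B idm i j = B i j"
  unfolding matmul_def idm_def by (simp add: if_distrib[of "\<lambda>x. _ * x"] cong: if_cong)

lemma mutation_GB_eq_BC_column_k:
  assumes k: "k < n" and Bkk: "B k k = 0" and i: "i < n"
    and GB_BC: "matmul n G B i k = matmul n B0 C i k"
  shows "matmul n (mutG n r B0 k e B C G) (mutB r k e B) i k = matmul n B0 (mutC r k e B C) i k"
proof -
  have "matmul n (mutG n r B0 k e B C G) (mutB r k e B) i k = (\<Sum>l<n. - (G i l * B l k))"
    unfolding matmul_def by (rule sum.cong) (auto simp: mutB_def mutG_def Bkk)
  also have "\<dots> = - matmul n B0 C i k"
    using GB_BC unfolding matmul_def by (simp add: sum_negf)
  also have "\<dots> = matmul n B0 (mutC r k e B C) i k"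
    unfolding matmul_def mutC_def by (simp add: sum_negf)
  finally show ?thesis .
qed

lemma mutation_GB_eq_BC_column_other:
  assumes k: "k < n" and Bkk: "B k k = 0" and jk: "j \<noteq> k"
    and GB_BC: "matmul n G B i j = matmul n B0 C i j" "matmul n G B i k = matmul n B0 C i k"
  shows "matmul n (mutG n r B0 k e B C G) (mutB r k e B) i j = matmul n B0 (mutC r k e B C) i j"
proof -
  define P where "P = (\<Sum>l<n. pos (- e * B l k) * G i l)"
  define Q where "Q = (\<Sum>l<n. pos (- e * C l k) * B0 i l)"
  define f where "f l = G i l * B l j + r k * B k j * (pos (- e * B l k) * G i l)
       + r k * pos (e * B k j) * (G i l * B l k)" for l
  have term_l: "mutG n r B0 k e B C G i l * mutB r k e B l j
      = f l + (if l = k then r k * B k j * (Q - P) else 0)" for l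
    using jk Bkk unfolding mutG_def mutB_def f_def P_def Q_def
    by (cases "l = k") (simp_all add: pos_def algebra_simps)
  have "matmul n (mutG n r B0 k e B C G) (mutB r k e B) i j
      = (\<Sum>l<n. f l) + r k * B k j * (Q - P)"
    unfolding matmul_def term_l using k by (simp add: sum.distrib)
  also have "(\<Sum>l<n. f l)
      = matmul n G B i j + r k * B k j * P + r k * pos (e * B k j) * matmul n G B i k"
    unfolding f_def matmul_def P_def by (simp add: sum.distrib sum_distrib_left)
  also have "\<dots> + r k * B k j * (Q - P)
      = matmul n B0 C i j + r k * pos (e * B k j) * matmul n B0 C i k + r k * B k j * Q"
    using GB_BC by (simp add: algebra_simps)
  also have "\<dots> = matmul n B0 (mutC r k e B C) i j"
    unfolding matmul_def mutC_def Q_def using jk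
    by (simp add: sum.distrib sum_distrib_left algebra_simps)
  finally show ?thesis .
qed

lemma seed_at_snoc:
  "seed_at n r B0 (ks @ [ke]) = mut_seed n r B0 (seed_at n r B0 ks) ke"
  unfolding seed_at_def by simp

lemma seed_at_GB_eq_BC:
  assumes sk: "skew_symmetrizer n d B" and ks: "\<forall>(k, e) \<in> set ks. k < n"
  shows "case seed_at n r B ks of (Bt, Ct, Gt) \<Rightarrow> skew_symmetrizer n d Bt \<and>
           (\<forall>i<n. \<forall>j<n. matmul n Gt Bt i j = matmul n B Ct i j)"
  using ks
proof (induction ks rule: rev_induct)
  case Nil
  then show ?case
    using sk by (simp add: seed_at_def matmul_idm_left matmul_idm_right)
next
  case (snoc ke ks)
  obtain k e where ke: "ke = (k, e)" by force
  with snoc.prems have k: "k < n" by auto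
  obtain Bt Ct Gt where S: "seed_at n r B ks = (Bt, Ct, Gt)" by (metis prod_cases3)
  with snoc have sk_t: "skew_symmetrizer n d Bt"
    and GB_BC: "\<forall>i<n. \<forall>j<n. matmul n Gt Bt i j = matmul n B Ct i j" by auto
  have Bkk: "Bt k k = 0" using skew_symmetrizer_diag[OF sk_t k] .
  have "matmul n (mutG n r B k e Bt Ct Gt) (mutB r k e Bt) i j = matmul n B (mutC r k e Bt Ct) i j"
    if "i < n" "j < n" for i j
    using mutation_GB_eq_BC_column_k[where B = Bt, OF k Bkk]
      mutation_GB_eq_BC_column_other[where B = Bt, OF k Bkk]
      GB_BC that k by (cases "j = k") auto
  then show ?case
    using skew_symmetrizer_mutB[OF sk_t k] by (simp add: seed_at_snoc S ke mut_seed_def)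
qed

text \<open>Only the skew-symmetrizability of \<open>B\<close> and \<open>k < n\<close> are needed: the identity holds
  for arbitrary integers \<open>r\<^sub>k\<close> and \<open>\<epsilon>\<close> and for arbitrary, even backtracking, paths.\<close>

theorem propositionP5:
  fixes n :: nat and r :: "nat \<Rightarrow> int" and B :: imat and ks :: "(nat \<times> int) list"
  assumes "n \<ge> 1"
    and "\<forall>i<n. r i > 0"
    and "skew_symmetrizable n B"
    and "\<forall>(k, e) \<in> set ks. k < n \<and> (e = 1 \<or> e = -1)"
    and "\<forall>i. Suc i < length ks \<longrightarrow> fst (ks ! i) \<noteq> fst (ks ! Suc i)"
  shows "case seed_at n r B ks of (Bt, Ct, Gt) \<Rightarrow>
           (\<forall>i<n. \<forall>j<n. matmul n Gt Bt i j = matmul n B Ct i j)"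
proof -
  obtain d where "skew_symmetrizer n d B"
    using assms(3) skew_symmetrizable_iff by blast
  moreover have "\<forall>(k, e) \<in> set ks. k < n"
    using assms(4) by auto
  ultimately show ?thesis
    using seed_at_GB_eq_BC[of n d B ks r] by (auto split: prod.splits)
qed

end
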